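(* Let $\delta\ge1$ and suppose $G=(V,E,w)$ is a $\delta$-perturbation of a graph $G^*=(V,E,w^* )$ with perfect HC-structure. Let $\mathcal{R}$ be the set of constraints $\{i,j|k\}$, over all triples of distinct indices $i,j,k$, such that $w_{ij}>\delta^2\max\{w_{ik},w_{jk}\}$. Then there exists a binary HC-tree for $V$ that is consistent with every constraint in $\mathcal{R}$.
   Context: $G$ is a $\delta$-perturbation of $G^*$ if $\frac1\delta w(e)\le w^*(e)\le\delta w(e)$ for all $e\in E$; weights are symmetric, nonnegative, and $0$ on non-edges. An HC-tree for $V=\{v_1,\dots,v_n\}$ is a rooted tree with leaf set $V$. A tree $T$ is consistent with constraint $\{i,j|k\}$ if $\mathrm{LCA}(v_i,v_j)$ is a proper descendant of $\mathrm{LCA}(v_i,v_j,v_k)$ (relation $\{i,j|k\}$ holds in $T$); relation $\{i|j|k\}$ holds if $\mathrm{LCA}(v_i,v_j)=\mathrm{LCA}(v_j,v_k)=\mathrm{LCA}(v_i,v_j,v_k)$. Triplet cost $c_T(i,j,k)$: $w_{ik}+w_{jk}$ if $\{i,j|k\}$; $w_{ij}+w_{jk}$ if $\{i,k|j\}$; $w_{ij}+w_{ik}$ if $\{j,k|i\}$; $w_{ij}+w_{jk}+w_{ik}$ if $\{i|j|k\}$. $\mathrm{TC}(T)=\sum c_T(i,j,k)$, $\mathrm{BC}=\sum\min\{w_{ij}+w_{ik},w_{ij}+w_{jk},w_{ik}+w_{jk}\}$ over unordered triples of distinct indices; $\rho(T)=\mathrm{TC}(T)/\mathrm{BC}$ (with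 $0/0=1$, $x/0=+\infty$ for $x>0$), $\rho^*=\min_T\rho(T)$; perfect HC-structure means $\rho^*=1$ (computed with weights $w^*$ for $G^*$). *)

theory Defs
  imports Complex_Main "HOL-Library.Extended_Real"
begin

text \<open>Rooted trees whose leaves are labelled by vertex indices (vertex v_i is index i).\<close>
datatype 'a rtree = Leaf 'a | Node "'a rtree list"

fun leaves_list :: "'a rtree \<Rightarrow> 'a list" where
  "leaves_list (Leaf a) = [a]"
| "leaves_list (Node ts) = concat (map leaves_list ts)"

definition leaves :: "'a rtree \<Rightarrow> 'a set" where
  "leaves t = set (leaves_list t)"

text \<open>All nodes of a tree, each node identified with the subtree rooted at it.\<close>
fun subtrees :: "'a rtree \<Rightarrow> 'a rtree set" where
  "subtrees (Leaf a) = {Leaf a}"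
| "subtrees (Node ts) = insert (Node ts) (\<Union> (subtrees ` set ts))"

text \<open>Every internal node has at least one child (so all leaves are labelled).\<close>
fun no_empty_node :: "'a rtree \<Rightarrow> bool" where
  "no_empty_node (Leaf a) = True"
| "no_empty_node (Node ts) = (ts \<noteq> [] \<and> (\<forall>t\<in>set ts. no_empty_node t))"

fun is_binary :: "'a rtree \<Rightarrow> bool" where
  "is_binary (Leaf a) = True"
| "is_binary (Node ts) = (length ts = 2 \<and> (\<forall>t\<in>set ts. is_binary t))"

definition hc_tree :: "nat \<Rightarrow> nat rtree \<Rightarrow> bool" where
  "hc_tree n T \<longleftrightarrow> no_empty_node T \<and> distinct (leaves_list T) \<and> leaves T = {..<n}"

definition descendant :: "'a rtree \<Rightarrow> 'a rtree \<Rightarrow> bool" where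
  "descendant u v \<longleftrightarrow> u \<in> subtrees v"

definition LCA :: "'a rtree \<Rightarrow> 'a set \<Rightarrow> 'a rtree" where
  "LCA T S = (THE u. u \<in> subtrees T \<and> S \<subseteq> leaves u \<and>
      (\<forall>v\<in>subtrees T. S \<subseteq> leaves v \<longrightarrow> descendant u v))"

text \<open>Relation {i,j|k}: LCA(i,j) is a proper descendant of LCA(i,j,k).\<close>
definition rel3 :: "'a rtree \<Rightarrow> 'a \<Rightarrow> 'a \<Rightarrow> 'a \<Rightarrow> bool" where
  "rel3 T i j k \<longleftrightarrow> descendant (LCA T {i,j}) (LCA T {i,j,k}) \<and> LCA T {i,j} \<noteq> LCA T {i,j,k}"

definition relstar :: "'a rtree \<Rightarrow> 'a \<Rightarrow> 'a \<Rightarrow> 'a \<Rightarrow> bool" where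
  "relstar T i j k \<longleftrightarrow> LCA T {i,j} = LCA T {j,k} \<and> LCA T {j,k} = LCA T {i,j,k}"

definition triplet_cost :: "'a rtree \<Rightarrow> ('a \<Rightarrow> 'a \<Rightarrow> real) \<Rightarrow> 'a \<Rightarrow> 'a \<Rightarrow> 'a \<Rightarrow> real" where
  "triplet_cost T w i j k =
     (if rel3 T i j k then w i k + w j k
      else if rel3 T i k j then w i j + w j k
      else if rel3 T j k i then w i j + w i k
      else w i j + w j k + w i k)"

text \<open>Unordered triples of distinct indices of V = {0..<n}, listed as i<j<k.\<close>
definition triples :: "nat \<Rightarrow> (nat \<times> nat \<times> nat) set" where
  "triples n = {(i,j,k). i < j \<and> j < k \<and> k < n}"

definition TC :: "nat \<Rightarrow> nat rtree \<Rightarrow> (nat \<Rightarrow> nat \<Rightarrow> real) \<Rightarrow> real" where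
  "TC n T w = (\<Sum>(i,j,k)\<in>triples n. triplet_cost T w i j k)"

definition BC :: "nat \<Rightarrow> (nat \<Rightarrow> nat \<Rightarrow> real) \<Rightarrow> real" where
  "BC n w = (\<Sum>(i,j,k)\<in>triples n. min (w i j + w i k) (min (w i j + w j k) (w i k + w j k)))"

definition rho :: "nat \<Rightarrow> nat rtree \<Rightarrow> (nat \<Rightarrow> nat \<Rightarrow> real) \<Rightarrow> ereal" where
  "rho n T w = (if BC n w = 0 then (if TC n T w = 0 then 1 else \<infinity>)
                else ereal (TC n T w / BC n w))"

definition rho_star :: "nat \<Rightarrow> (nat \<Rightarrow> nat \<Rightarrow> real) \<Rightarrow> ereal" where
  "rho_star n w = (INF T\<in>{T. hc_tree n T}. rho n T w)"

definition perfect_HC :: "nat \<Rightarrow> (nat \<Rightarrow> nat \<Rightarrow> real) \<Rightarrow> bool" where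
  "perfect_HC n w \<longleftrightarrow> rho_star n w = 1"

definition weighted_graph :: "nat \<Rightarrow> (nat \<times> nat) set \<Rightarrow> (nat \<Rightarrow> nat \<Rightarrow> real) \<Rightarrow> bool" where
  "weighted_graph n E w \<longleftrightarrow> E \<subseteq> {..<n} \<times> {..<n} \<and> (\<forall>i j. (i,j) \<in> E \<longrightarrow> (j,i) \<in> E)
     \<and> (\<forall>i<n. \<forall>j<n. w i j = w j i \<and> 0 \<le> w i j \<and> ((i,j) \<notin> E \<longrightarrow> w i j = 0))"

definition perturbation :: "real \<Rightarrow> (nat \<times> nat) set \<Rightarrow> (nat \<Rightarrow> nat \<Rightarrow> real) \<Rightarrow> (nat \<Rightarrow> nat \<Rightarrow> real) \<Rightarrow> bool" where
  "perturbation \<delta> E w wstar \<longleftrightarrow> (\<forall>(i,j)\<in>E. w i j / \<delta> \<le> wstar i j \<and> wstar i j \<le> \<delta> * w i j)"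

end

theory Submission
  imports Defs "HOL-Library.FuncSet"
begin

text \<open>
  TC takes only finitely many values, so \<rho>* = 1 is attained: some HC-tree T has TC = BC for w*,
  i.e. every triplet pays its minimal cost in T. A triplet whose pair {i,j} is strictly the
  heaviest pays its minimal cost only if {i,j|k} holds in T, and the perturbation bounds turn
  w_ij > \<delta>^2 max(w_ik, w_jk) into w*_ij > max(w*_ik, w*_jk). Finally, {i,j|k} holds iff some
  cluster (leaf set of a node) contains i and j but not k, and replacing every node of T by a
  right comb of its children yields a binary tree that keeps all clusters of T.
\<close>

lemma subtrees_refl: "t \<in> subtrees t"
  by (cases t) auto

lemma size_subtree: "u \<in> subtrees v \<Longrightarrow> u = v \<or> size u < size v"
proof (induction v)
  case (Node ts)
  show ?case
  proof (cases "u = Node ts")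
    case False
    then obtain t where t: "t \<in> set ts" "u \<in> subtrees t" using Node.prems by auto
    have "size t < size (Node ts)" using size_list_estimation'[OF t(1), of "size t" size] by simp
    with Node.IH[OF t] show ?thesis by auto
  qed simp
qed simp

lemma descendant_antisym: "descendant u v \<Longrightarrow> descendant v u \<Longrightarrow> u = v"
  unfolding descendant_def by (metis size_subtree less_asym)

lemma leaves_subtree: "u \<in> subtrees v \<Longrightarrow> leaves u \<subseteq> leaves v"
  by (induction v) (auto simp: leaves_def)

lemma children_eq_if_shared_leaf:
  "distinct (leaves_list (Node ts)) \<Longrightarrow> t \<in> set ts \<Longrightarrow> t' \<in> set ts
    \<Longrightarrow> x \<in> leaves t \<Longrightarrow> x \<in> leaves t' \<Longrightarrow> t = t'"
  by (induction ts) (auto simp: leaves_def)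

lemma LCA_exists:
  assumes "distinct (leaves_list T)" "S \<noteq> {}" "S \<subseteq> leaves T"
  shows "\<exists>u. u \<in> subtrees T \<and> S \<subseteq> leaves u \<and>
    (\<forall>v\<in>subtrees T. S \<subseteq> leaves v \<longrightarrow> descendant u v)"
  using assms
proof (induction T)
  case (Leaf x)
  then show ?case by (auto simp: descendant_def)
next
  case (Node ts)
  show ?case
  proof (cases "\<exists>t\<in>set ts. S \<subseteq> leaves t")
    case True
    then obtain t where t: "t \<in> set ts" "S \<subseteq> leaves t" by auto
    have "distinct (leaves_list t)" using Node.prems(1) t(1) by (auto simp: distinct_concat_iff)
    from Node.IH[OF t(1) this Node.prems(2) t(2)] obtain u where
      u: "u \<in> subtrees t" "S \<subseteq> leaves u" "\<forall>v\<in>subtrees t. S \<subseteq> leaves v \<longrightarrow> descendant u v"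
      by blast
    show ?thesis
    proof (intro exI conjI ballI impI)
      show "u \<in> subtrees (Node ts)" using u(1) t(1) by auto
      show "S \<subseteq> leaves u" by fact
      fix v assume v: "v \<in> subtrees (Node ts)" "S \<subseteq> leaves v"
      show "descendant u v"
      proof (cases "v = Node ts")
        case True then show ?thesis using u(1) t(1) by (auto simp: descendant_def)
      next
        case False
        then obtain t' where t': "t' \<in> set ts" "v \<in> subtrees t'" using v(1) by auto
        obtain x where "x \<in> S" using Node.prems(2) by auto
        then have "t' = t"
          using children_eq_if_shared_leaf[OF Node.prems(1) t'(1) t(1)] t(2) v(2)
            leaves_subtree[OF t'(2)] by blast
        then show ?thesis using u(3) t' v(2) by auto
      qed
    qed
  next
    case False
    show ?thesis
    proof (intro exI conjI ballI impI)
      show "Node ts \<in> subtrees (Node ts)" "S \<subseteq> leaves (Node ts)" using Node.prems(3) by auto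
      fix v assume v: "v \<in> subtrees (Node ts)" "S \<subseteq> leaves v"
      then show "descendant (Node ts) v"
        using False leaves_subtree by (fastforce simp: descendant_def)
    qed
  qed
qed

lemma LCA_props:
  assumes "distinct (leaves_list T)" "S \<noteq> {}" "S \<subseteq> leaves T"
  shows "LCA T S \<in> subtrees T" "S \<subseteq> leaves (LCA T S)"
    "\<And>v. v \<in> subtrees T \<Longrightarrow> S \<subseteq> leaves v \<Longrightarrow> descendant (LCA T S) v"
proof -
  have "\<exists>!u. u \<in> subtrees T \<and> S \<subseteq> leaves u \<and>
      (\<forall>v\<in>subtrees T. S \<subseteq> leaves v \<longrightarrow> descendant u v)"
    using LCA_exists[OF assms] descendant_antisym by blast
  from theI'[OF this] show "LCA T S \<in> subtrees T" "S \<subseteq> leaves (LCA T S)"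
    "\<And>v. v \<in> subtrees T \<Longrightarrow> S \<subseteq> leaves v \<Longrightarrow> descendant (LCA T S) v"
    unfolding LCA_def by blast+
qed

definition clusters :: "'a rtree \<Rightarrow> 'a set set" where
  "clusters T = leaves ` subtrees T"

lemma rel3_iff_cluster:
  assumes "distinct (leaves_list T)" "i \<in> leaves T" "j \<in> leaves T" "k \<in> leaves T"
  shows "rel3 T i j k \<longleftrightarrow> (\<exists>C\<in>clusters T. i \<in> C \<and> j \<in> C \<and> k \<notin> C)"
proof -
  have ij: "{i,j} \<noteq> {}" "{i,j} \<subseteq> leaves T" and ijk: "{i,j,k} \<noteq> {}" "{i,j,k} \<subseteq> leaves T"
    using assms by auto
  note ij_props = LCA_props[OF assms(1) ij] and ijk_props = LCA_props[OF assms(1) ijk]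
  show ?thesis
  proof
    assume rel: "rel3 T i j k"
    have "k \<notin> leaves (LCA T {i,j})"
    proof
      assume "k \<in> leaves (LCA T {i,j})"
      then have "descendant (LCA T {i,j,k}) (LCA T {i,j})" using ij_props ijk_props(3) by auto
      then show False using rel descendant_antisym unfolding rel3_def by blast
    qed
    then show "\<exists>C\<in>clusters T. i \<in> C \<and> j \<in> C \<and> k \<notin> C"
      using ij_props unfolding clusters_def by blast
  next
    assume "\<exists>C\<in>clusters T. i \<in> C \<and> j \<in> C \<and> k \<notin> C"
    then obtain s where s: "s \<in> subtrees T" "i \<in> leaves s" "j \<in> leaves s" "k \<notin> leaves s"
      unfolding clusters_def by blast
    have "descendant (LCA T {i,j}) s" using ij_props(3) s by auto
    then have "k \<notin> leaves (LCA T {i,j})" using leaves_subtree s(4) unfolding descendant_def by blast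
    moreover have "descendant (LCA T {i,j}) (LCA T {i,j,k})" using ij_props ijk_props by auto
    ultimately show "rel3 T i j k" unfolding rel3_def using ijk_props(2) by auto
  qed
qed

fun right_comb :: "'a rtree list \<Rightarrow> 'a rtree" where
  "right_comb [] = Node []"
| "right_comb [t] = t"
| "right_comb (t # u # ts) = Node [t, right_comb (u # ts)]"

fun binarize :: "'a rtree \<Rightarrow> 'a rtree" where
  "binarize (Leaf a) = Leaf a"
| "binarize (Node ts) = right_comb (map binarize ts)"

lemma leaves_list_right_comb: "leaves_list (right_comb ts) = concat (map leaves_list ts)"
  by (induction ts rule: right_comb.induct) auto

lemma leaves_list_binarize: "leaves_list (binarize t) = leaves_list t"
proof (induction t)
  case (Node ts)
  then have "map leaves_list (map binarize ts) = map leaves_list ts" by simp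
  then show ?case by (simp only: binarize.simps leaves_list.simps leaves_list_right_comb)
qed simp

lemma no_empty_node_right_comb:
  "ts \<noteq> [] \<Longrightarrow> \<forall>t\<in>set ts. no_empty_node t \<Longrightarrow> no_empty_node (right_comb ts)"
  by (induction ts rule: right_comb.induct) auto

lemma is_binary_right_comb: "ts \<noteq> [] \<Longrightarrow> \<forall>t\<in>set ts. is_binary t \<Longrightarrow> is_binary (right_comb ts)"
  by (induction ts rule: right_comb.induct) auto

lemma no_empty_node_binarize: "no_empty_node t \<Longrightarrow> no_empty_node (binarize t)"
  by (induction t) (auto intro!: no_empty_node_right_comb)

lemma is_binary_binarize: "no_empty_node t \<Longrightarrow> is_binary (binarize t)"
  by (induction t) (auto intro!: is_binary_right_comb)

lemma hc_tree_binarize: "hc_tree n T \<Longrightarrow> hc_tree n (binarize T)"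
  unfolding hc_tree_def leaves_def by (simp add: no_empty_node_binarize leaves_list_binarize)

lemma subtrees_right_comb: "t \<in> set ts \<Longrightarrow> subtrees t \<subseteq> subtrees (right_comb ts)"
  by (induction ts rule: right_comb.induct) auto

lemma clusters_binarize: "clusters t \<subseteq> clusters (binarize t)"
proof (induction t)
  case (Node ts)
  have "leaves (binarize (Node ts)) = leaves (Node ts)"
    unfolding leaves_def by (simp only: leaves_list_binarize)
  then have "leaves (Node ts) \<in> clusters (binarize (Node ts))"
    unfolding clusters_def using subtrees_refl by (metis image_eqI)
  moreover have "clusters c \<subseteq> clusters (binarize (Node ts))" if "c \<in> set ts" for c
  proof -
    have "subtrees (binarize c) \<subseteq> subtrees (binarize (Node ts))"
      using subtrees_right_comb[of "binarize c" "map binarize ts"] that by simp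
    then show ?thesis using Node.IH[OF that] unfolding clusters_def by blast
  qed
  ultimately show ?case unfolding clusters_def by auto
qed simp

lemma rel3_binarize:
  assumes "distinct (leaves_list T)" "i \<in> leaves T" "j \<in> leaves T" "k \<in> leaves T"
    and "rel3 T i j k"
  shows "rel3 (binarize T) i j k"
proof -
  have T': "distinct (leaves_list (binarize T))" "leaves (binarize T) = leaves T"
    using assms(1) unfolding leaves_def by (simp_all only: leaves_list_binarize)
  obtain C where "C \<in> clusters T" "i \<in> C" "j \<in> C" "k \<notin> C"
    using rel3_iff_cluster[OF assms(1-4)] assms(5) by blast
  then show ?thesis
    using rel3_iff_cluster[OF T'(1)] T'(2) assms(2-4) clusters_binarize[of T] by blast
qed

lemma finite_triples: "finite (triples n)"
  unfolding triples_def by (rule finite_subset[of _ "{..<n} \<times> {..<n} \<times> {..<n}"]) auto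

lemma finite_range_TC: "finite (range (\<lambda>T. TC n T w))"
proof -
  define C where "C = (\<lambda>(i,j,k).
    {w i k + w j k, w i j + w j k, w i j + w i k, w i j + w j k + w i k})"
  have "range (\<lambda>T. TC n T w) \<subseteq> (\<lambda>g. \<Sum>p\<in>triples n. g p) ` PiE (triples n) C"
  proof
    fix x assume "x \<in> range (\<lambda>T. TC n T w)"
    then obtain T where x: "x = TC n T w" by blast
    define g where "g = restrict (\<lambda>(i,j,k). triplet_cost T w i j k) (triples n)"
    have "g \<in> PiE (triples n) C"
      unfolding g_def C_def triplet_cost_def by (auto split: prod.splits)
    moreover have "x = (\<Sum>p\<in>triples n. g p)"
      unfolding x TC_def g_def by (rule sum.cong) auto
    ultimately show "x \<in> (\<lambda>g. \<Sum>p\<in>triples n. g p) ` PiE (triples n) C" by blast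
  qed
  moreover have "finite (PiE (triples n) C)"
    by (intro finite_PiE finite_triples) (auto simp: C_def split: prod.splits)
  ultimately show ?thesis by (meson finite_imageI finite_subset)
qed

lemma perfect_HC_obtains_TC_eq_BC:
  assumes "perfect_HC n w"
  obtains T where "hc_tree n T" "TC n T w = BC n w"
proof -
  define A where "A = (\<lambda>T. rho n T w) ` {T. hc_tree n T}"
  have "A \<subseteq> {1, \<infinity>} \<union> (\<lambda>x. ereal (x / BC n w)) ` range (\<lambda>T. TC n T w)"
    unfolding A_def rho_def by auto
  then have "finite A"
    using finite_range_TC by (meson finite_Un finite_imageI finite_insert finite.emptyI finite_subset)
  moreover have "Inf A = 1"
    using assms unfolding perfect_HC_def rho_star_def A_def by simp
  moreover from this have "A \<noteq> {}" by (auto simp: top_ereal_def)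
  ultimately have "1 \<in> A" by (metis Min_in cInf_eq_Min)
  then obtain T where "hc_tree n T" "rho n T w = 1" unfolding A_def by auto
  then show thesis using that unfolding rho_def by (auto split: if_splits)
qed

lemma min_le_triplet_cost:
  assumes "0 \<le> w i j" "0 \<le> w i k" "0 \<le> w j k"
  shows "min (w i j + w i k) (min (w i j + w j k) (w i k + w j k)) \<le> triplet_cost T w i j k"
  using assms unfolding triplet_cost_def by (auto simp: min_def)

lemma triplet_cost_eq_min_if_TC_eq_BC:
  assumes nonneg: "\<forall>a<n. \<forall>b<n. 0 \<le> w a b" and "TC n T w = BC n w" and abc: "(a,b,c) \<in> triples n"
  shows "triplet_cost T w a b c = min (w a b + w a c) (min (w a b + w b c) (w a c + w b c))"
proof (rule ccontr)
  let ?min = "\<lambda>(i,j,k). min (w i j + w i k) (min (w i j + w j k) (w i k + w j k))"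
  let ?cost = "\<lambda>(i,j,k). triplet_cost T w i j k"
  assume "\<not> ?thesis"
  have le: "\<forall>p\<in>triples n. ?min p \<le> ?cost p"
    using nonneg by (auto simp: triples_def intro!: min_le_triplet_cost)
  with abc \<open>\<not> ?thesis\<close> have "\<exists>p\<in>triples n. ?min p < ?cost p" by force
  then have "sum ?min (triples n) < sum ?cost (triples n)"
    by (rule sum_strict_mono_ex1[OF finite_triples le])
  then show False using assms(2) unfolding TC_def BC_def by simp
qed

lemma rel3_of_min_triplet_cost:
  assumes "triplet_cost T w a b c = min (w a b + w a c) (min (w a b + w b c) (w a c + w b c))"
    and "0 \<le> w a b" "0 \<le> w a c" "0 \<le> w b c"
  shows "w a c < w a b \<Longrightarrow> w b c < w a b \<Longrightarrow> rel3 T a b c"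
    and "w a b < w a c \<Longrightarrow> w b c < w a c \<Longrightarrow> rel3 T a c b"
    and "w a b < w b c \<Longrightarrow> w a c < w b c \<Longrightarrow> rel3 T b c a"
  using assms unfolding triplet_cost_def by (auto split: if_splits simp: min_def)

lemma rel3_swap: "rel3 T j i k \<longleftrightarrow> rel3 T i j k"
  unfolding rel3_def by (simp add: insert_commute)

lemma rel3_of_strictly_heaviest_pair:
  assumes nonneg_sym: "\<forall>a<n. \<forall>b<n. 0 \<le> w a b \<and> w a b = w b a"
    and opt: "TC n T w = BC n w"
    and ijk: "i < n" "j < n" "k < n" "distinct [i, j, k]"
    and heaviest: "w i k < w i j" "w j k < w i j"
  shows "rel3 T i j k"
proof -
  \<comment> \<open>TC and BC only sum over increasing triples, so optimality is known for those only.\<close>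
  have sorted: "(w a c < w a b \<longrightarrow> w b c < w a b \<longrightarrow> rel3 T a b c) \<and>
      (w a b < w a c \<longrightarrow> w b c < w a c \<longrightarrow> rel3 T a c b) \<and>
      (w a b < w b c \<longrightarrow> w a c < w b c \<longrightarrow> rel3 T b c a)"
    if "a < b" "b < c" "c < n" for a b c
  proof -
    have "(a,b,c) \<in> triples n" using that by (simp add: triples_def)
    with nonneg_sym opt have "triplet_cost T w a b c =
        min (w a b + w a c) (min (w a b + w b c) (w a c + w b c))"
      by (intro triplet_cost_eq_min_if_TC_eq_BC) auto
    with that nonneg_sym show ?thesis using rel3_of_min_triplet_cost[of T w a b c] by simp
  qed
  have sym: "w i j = w j i" "w i k = w k i" "w j k = w k j" using nonneg_sym ijk by auto
  consider "i < j" "j < k" | "i < k" "k < j" | "j < i" "i < k" | "j < k" "k < i"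
    | "k < i" "i < j" | "k < j" "j < i"
    using ijk(4) by (simp, linarith)
  then show ?thesis
    by cases (use sorted[of i j k] sorted[of i k j] sorted[of j i k] sorted[of j k i]
        sorted[of k i j] sorted[of k j i] ijk heaviest sym in \<open>auto simp: rel3_swap[of T i j k]\<close>)
qed

lemma perturbation_upper_bound:
  assumes "weighted_graph n E w" "weighted_graph n E wstar" "perturbation \<delta> E w wstar" "0 \<le> \<delta>"
    and "i < n" "j < n"
  shows "wstar i j \<le> \<delta> * w i j"
proof (cases "(i,j) \<in> E")
  case True
  then show ?thesis using assms(3) unfolding perturbation_def by auto
next
  case False
  then show ?thesis using assms unfolding weighted_graph_def by auto
qed

lemma perturbation_preserves_heaviest_pair:
  assumes "1 \<le> \<delta>" and graphs: "weighted_graph n E w" "weighted_graph n E wstar"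
    and pert: "perturbation \<delta> E w wstar"
    and ijk: "i < n" "j < n" "k < n"
    and heavy: "\<delta>\<^sup>2 * max (w i k) (w j k) < w i j"
  shows "wstar i k < wstar i j" "wstar j k < wstar i j"
proof -
  let ?m = "max (w i k) (w j k)"
  have "0 \<le> w i k" using graphs(1) ijk unfolding weighted_graph_def by auto
  then have "0 \<le> \<delta>\<^sup>2 * ?m" by simp
  then have "0 < w i j" using heavy by linarith
  then have "(i,j) \<in> E" using graphs(1) ijk unfolding weighted_graph_def by (metis less_irrefl)
  then have lower: "w i j / \<delta> \<le> wstar i j" using pert unfolding perturbation_def by auto
  have "\<delta> * ?m * \<delta> < w i j" using heavy by (simp add: power2_eq_square algebra_simps)
  then have "\<delta> * ?m < w i j / \<delta>" using \<open>1 \<le> \<delta>\<close> by (simp add: pos_less_divide_eq)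
  moreover have "wstar i k \<le> \<delta> * ?m" "wstar j k \<le> \<delta> * ?m"
    using perturbation_upper_bound[OF graphs pert] ijk \<open>1 \<le> \<delta>\<close>
    by (meson max.cobounded1 max.cobounded2 mult_left_mono order_trans zero_le_one)+
  ultimately show "wstar i k < wstar i j" "wstar j k < wstar i j" using lower by linarith+
qed

theorem lemma6:
  fixes n :: nat and E :: "(nat \<times> nat) set" and w wstar :: "nat \<Rightarrow> nat \<Rightarrow> real" and \<delta> :: real
  assumes "\<delta> \<ge> 1"
    and "weighted_graph n E w" and "weighted_graph n E wstar"
    and "perturbation \<delta> E w wstar"
    and "perfect_HC n wstar"
  shows "\<exists>T. hc_tree n T \<and> is_binary T \<and>
           (\<forall>i j k. i < n \<and> j < n \<and> k < n \<and> distinct [i, j, k] \<and>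
               w i j > \<delta>\<^sup>2 * max (w i k) (w j k) \<longrightarrow> rel3 T i j k)"
proof -
  obtain T where T: "hc_tree n T" "TC n T wstar = BC n wstar"
    using perfect_HC_obtains_TC_eq_BC[OF assms(5)] .
  have wstar_nonneg_sym: "\<forall>a<n. \<forall>b<n. 0 \<le> wstar a b \<and> wstar a b = wstar b a"
    using assms(3) unfolding weighted_graph_def by metis
  show ?thesis
  proof (intro exI conjI allI impI)
    show "hc_tree n (binarize T)" using T(1) by (rule hc_tree_binarize)
    show "is_binary (binarize T)" using T(1) unfolding hc_tree_def by (simp add: is_binary_binarize)
    fix i j k
    assume ijk: "i < n \<and> j < n \<and> k < n \<and> distinct [i, j, k] \<and> w i j > \<delta>\<^sup>2 * max (w i k) (w j k)"
    then have "wstar i k < wstar i j" "wstar j k < wstar i j"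
      using perturbation_preserves_heaviest_pair[OF assms(1-4)] by auto
    then have "rel3 T i j k" using rel3_of_strictly_heaviest_pair[OF wstar_nonneg_sym T(2)] ijk by auto
    then show "rel3 (binarize T) i j k"
      using T(1) ijk unfolding hc_tree_def by (intro rel3_binarize) auto
  qed
qed

end
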